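(* Let $\lambda,\mu$ be partitions and $j\in\mathbb Z$. Suppose $\mu$ has an addable node $\mathfrak m$ in column $j$ but $\lambda$ has no addable node in column $j$, and let $\mu^+=\mu\cup\{\mathfrak m\}$. Then $\mathrm i_{\lambda\mu}=\mathrm i_{\lambda\mu^+}$.
   Context: Partitions are identified with Young diagrams $\{(a,b)\in\mathbb N^2:b\le\lambda_a\}$; nodes are elements of $\mathbb N^2$; $(a,b)$ has height $a+b$ and lies in column $b-a$ (smaller column = further left). Neighbours: $\mathtt{NE}(\mathfrak n)=\mathfrak n+(0,1)$, $\mathtt{SE}(\mathfrak n)=\mathfrak n-(1,0)$, $\mathtt{N}(\mathfrak n)=\mathfrak n+(1,1)$. An addable node of $\lambda$ is a node not in $\lambda$ whose addition gives a partition. A tile is a finite nonempty set of nodes orderable $\mathfrak n_1,\dots,\mathfrak n_r$ with $\mathfrak n_{i+1}\in\{\mathtt{NE}(\mathfrak n_i),\mathtt{SE}(\mathfrak n_i)\}$, with start (leftmost node) and end (rightmost node); it is a Dyck tile if its start and end both attain the maximal height of its nodes. A Dyck tiling of $\lambda\setminus\mu$ (for $\lambda\supseteq\mu$) is a partition of $\lambda\setminus\mu$ into Dyck tiles. It is cover-inclusive if whenever $\mathfrak a$ and $\mathtt N(\mathfrak a)$ both lie in $\lambda\setminus\mu$, the tile containing $\mathtt N(\mathfrak a)$ starts weakly to the left of, and ends weakly to the right of, the tile containing $\mathfrak a$. $\mathrm i_{\lambda\mu}$ is the number of cover-inclusive Dyck tilings of $\lambda\setminus\mu$ if $\lambda\supseteq\mu$,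 and $0$ otherwise. *)

theory Defs
  imports Main
begin

type_synonym node = "nat \<times> nat"

definition is_node :: "node \<Rightarrow> bool" where
  "is_node n \<longleftrightarrow> fst n \<ge> 1 \<and> snd n \<ge> 1"

definition height :: "node \<Rightarrow> nat" where
  "height n = fst n + snd n"

definition col :: "node \<Rightarrow> int" where
  "col n = int (snd n) - int (fst n)"

definition NE :: "node \<Rightarrow> node" where
  "NE n = (fst n, snd n + 1)"

definition N :: "node \<Rightarrow> node" where
  "N n = (fst n + 1, snd n + 1)"

text \<open>m = SE(n), i.e. m = n - (1,0), written without truncated subtraction.\<close>
definition is_SE :: "node \<Rightarrow> node \<Rightarrow> bool" where
  "is_SE n m \<longleftrightarrow> fst m + 1 = fst n \<and> snd m = snd n"

text \<open>Young diagram {(a,b) : 1 \<le> b \<le> lambda_a} of a partition: a finite set of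
  nodes closed downwards in both coordinates.\<close>
definition is_partition :: "node set \<Rightarrow> bool" where
  "is_partition P \<longleftrightarrow> finite P \<and> (\<forall>n\<in>P. is_node n) \<and>
     (\<forall>a b a' b'. (a, b) \<in> P \<longrightarrow> 1 \<le> a' \<longrightarrow> a' \<le> a \<longrightarrow> 1 \<le> b' \<longrightarrow> b' \<le> b \<longrightarrow> (a', b') \<in> P)"

definition addable :: "node set \<Rightarrow> node \<Rightarrow> bool" where
  "addable P n \<longleftrightarrow> is_node n \<and> n \<notin> P \<and> is_partition (insert n P)"

definition is_tile :: "node set \<Rightarrow> bool" where
  "is_tile T \<longleftrightarrow> (\<forall>n\<in>T. is_node n) \<and>
     (\<exists>xs. xs \<noteq> [] \<and> set xs = T \<and>
        (\<forall>i. Suc i < length xs \<longrightarrow> (xs ! Suc i = NE (xs ! i) \<or> is_SE (xs ! i) (xs ! Suc i))))"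

definition tile_start :: "node set \<Rightarrow> node" where
  "tile_start T = (THE n. n \<in> T \<and> (\<forall>m\<in>T. col n \<le> col m))"

definition tile_end :: "node set \<Rightarrow> node" where
  "tile_end T = (THE n. n \<in> T \<and> (\<forall>m\<in>T. col m \<le> col n))"

definition is_dyck_tile :: "node set \<Rightarrow> bool" where
  "is_dyck_tile T \<longleftrightarrow> is_tile T \<and>
     height (tile_start T) = Max (height ` T) \<and> height (tile_end T) = Max (height ` T)"

definition is_dyck_tiling :: "node set \<Rightarrow> node set set \<Rightarrow> bool" where
  "is_dyck_tiling S D \<longleftrightarrow> (\<forall>T\<in>D. is_dyck_tile T) \<and> \<Union>D = S \<and>
     (\<forall>T1\<in>D. \<forall>T2\<in>D. T1 \<noteq> T2 \<longrightarrow> T1 \<inter> T2 = {})"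

definition cover_inclusive :: "node set \<Rightarrow> node set set \<Rightarrow> bool" where
  "cover_inclusive S D \<longleftrightarrow>
     (\<forall>a. a \<in> S \<longrightarrow> N a \<in> S \<longrightarrow>
        (\<forall>T\<in>D. \<forall>T'\<in>D. a \<in> T \<longrightarrow> N a \<in> T' \<longrightarrow>
           col (tile_start T') \<le> col (tile_start T) \<and> col (tile_end T) \<le> col (tile_end T')))"

definition ci_dyck_tilings :: "node set \<Rightarrow> node set \<Rightarrow> node set set set" where
  "ci_dyck_tilings lam mu = {D. is_dyck_tiling (lam - mu) D \<and> cover_inclusive (lam - mu) D}"

definition i_num :: "node set \<Rightarrow> node set \<Rightarrow> nat" where
  "i_num lam mu = (if mu \<subseteq> lam then card (ci_dyck_tilings lam mu) else 0)"

end

theory Submission imports Defs begin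

text \<open>Let \<open>m = (a, b)\<close>. As \<open>m\<close> is addable to \<open>\<mu>\<close>, its lower neighbours \<open>(a - 1, b)\<close> and
  \<open>(a, b - 1)\<close> lie in \<open>\<mu>\<close> whenever they are nodes. Hence a tile of a Dyck tiling of \<open>\<lambda> - \<mu>\<close>
  through \<open>m\<close>, other than \<open>{m}\<close>, enters \<open>m\<close> from \<open>(a + 1, b)\<close> and leaves it to \<open>(a, b + 1)\<close>
  (the Dyck condition forbids \<open>m\<close> to be an endpoint): \<open>m\<close> is a valley of its tile.
  If a tile has a valley \<open>x\<close>, then \<open>N x\<close> lies in \<open>\<lambda>\<close>, since otherwise it would be an addable
  node of \<open>\<lambda>\<close> in column \<open>j\<close>, and cover-inclusiveness makes the tile through \<open>N x\<close> reach
  beyond both neighbours of \<open>x\<close>; as tiles are disjoint, \<open>N x\<close> is again a valley. Iterating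
  yields infinitely many nodes of \<open>\<lambda>\<close>. So \<open>{m}\<close> is a tile of every cover-inclusive Dyck tiling
  of \<open>\<lambda> - \<mu>\<close>, and deleting it is a bijection onto those of \<open>\<lambda> - \<mu>\<^sup>+\<close>.\<close>

definition tile_walk :: "node set \<Rightarrow> node list \<Rightarrow> bool" where
  "tile_walk T xs \<longleftrightarrow> xs \<noteq> [] \<and> set xs = T \<and>
     (\<forall>i. Suc i < length xs \<longrightarrow> (xs ! Suc i = NE (xs ! i) \<or> is_SE (xs ! i) (xs ! Suc i)))"

lemma tile_walk_exists: "is_tile T \<Longrightarrow> \<exists>xs. tile_walk T xs"
  unfolding is_tile_def tile_walk_def by blast

lemma tile_walk_col:
  assumes "tile_walk T xs" "i < length xs"
  shows "col (xs ! i) = col (hd xs) + int i"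
  using assms(2)
proof (induction i)
  case 0
  with assms(1) show ?case by (simp add: tile_walk_def hd_conv_nth)
next
  case (Suc i)
  then have "col (xs ! Suc i) = col (xs ! i) + 1"
    using assms(1) by (auto simp: tile_walk_def col_def NE_def is_SE_def)
  with Suc show ?case by simp
qed

lemma tile_walk_col_inj:
  assumes "tile_walk T xs" "x \<in> T" "y \<in> T" "col x = col y"
  shows "x = y"
proof -
  obtain i k where "i < length xs" "x = xs ! i" "k < length xs" "y = xs ! k"
    using assms(1-3) by (auto simp: tile_walk_def in_set_conv_nth)
  with assms(1,4) tile_walk_col show ?thesis by fastforce
qed

lemma tile_walk_col_bounds:
  assumes "tile_walk T xs" "y \<in> T"
  shows "col (hd xs) \<le> col y" "col y \<le> col (last xs)"
proof -
  obtain i where i: "i < length xs" "y = xs ! i"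
    using assms by (auto simp: tile_walk_def in_set_conv_nth)
  have "xs \<noteq> []" using assms(1) by (simp add: tile_walk_def)
  then have "col (last xs) = col (hd xs) + int (length xs - 1)"
    using tile_walk_col[OF assms(1)] by (simp add: last_conv_nth)
  with i tile_walk_col[OF assms(1) i(1)] show "col (hd xs) \<le> col y" "col y \<le> col (last xs)"
    by auto
qed

lemma tile_walk_start:
  assumes "tile_walk T xs"
  shows "tile_start T = hd xs"
  unfolding tile_start_def
proof (rule the_equality)
  have "hd xs \<in> T" using assms by (auto simp: tile_walk_def)
  then show "hd xs \<in> T \<and> (\<forall>m\<in>T. col (hd xs) \<le> col m)"
    using tile_walk_col_bounds(1)[OF assms] by blast
  fix n assume "n \<in> T \<and> (\<forall>m\<in>T. col n \<le> col m)"
  with \<open>hd xs \<in> T\<close> show "n = hd xs"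
    using tile_walk_col_bounds(1)[OF assms] tile_walk_col_inj[OF assms] by (meson order.antisym)
qed

lemma tile_walk_end:
  assumes "tile_walk T xs"
  shows "tile_end T = last xs"
  unfolding tile_end_def
proof (rule the_equality)
  have "last xs \<in> T" using assms by (auto simp: tile_walk_def)
  then show "last xs \<in> T \<and> (\<forall>m\<in>T. col m \<le> col (last xs))"
    using tile_walk_col_bounds(2)[OF assms] by blast
  fix n assume "n \<in> T \<and> (\<forall>m\<in>T. col m \<le> col n)"
  with \<open>last xs \<in> T\<close> show "n = last xs"
    using tile_walk_col_bounds(2)[OF assms] tile_walk_col_inj[OF assms] by (meson order.antisym)
qed

lemma tile_start_mem: "is_tile T \<Longrightarrow> tile_start T \<in> T"
  using tile_walk_exists tile_walk_start by (fastforce simp: tile_walk_def)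

lemma tile_start_le: "is_tile T \<Longrightarrow> y \<in> T \<Longrightarrow> col (tile_start T) \<le> col y"
  using tile_walk_exists tile_walk_start tile_walk_col_bounds(1) by metis

lemma tile_end_ge: "is_tile T \<Longrightarrow> y \<in> T \<Longrightarrow> col y \<le> col (tile_end T)"
  using tile_walk_exists tile_walk_end tile_walk_col_bounds(2) by metis

lemma tile_col_inj: "is_tile T \<Longrightarrow> x \<in> T \<Longrightarrow> y \<in> T \<Longrightarrow> col x = col y \<Longrightarrow> x = y"
  using tile_walk_exists tile_walk_col_inj by metis

lemma tile_start_eq_end:
  assumes "is_tile T" "tile_start T = tile_end T"
  shows "T = {tile_start T}"
proof -
  have "y = tile_start T" if "y \<in> T" for y
    using tile_start_le[OF assms(1) that] tile_end_ge[OF assms(1) that] assms(2)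
      tile_col_inj[OF assms(1) that tile_start_mem[OF assms(1)]] by simp
  with tile_start_mem[OF assms(1)] show ?thesis by blast
qed

lemma tile_pred:
  assumes "is_tile T" "(a, b) \<in> T" "(a, b) \<noteq> tile_start T"
  shows "(a + 1, b) \<in> T \<or> (a, b - 1) \<in> T"
proof -
  obtain xs where xs: "tile_walk T xs" using tile_walk_exists[OF assms(1)] ..
  then obtain i where i: "i < length xs" "(a, b) = xs ! i"
    using assms(2) by (auto simp: tile_walk_def in_set_conv_nth)
  with assms(3) tile_walk_start[OF xs] obtain k where k: "i = Suc k"
    by (cases i) (auto simp: hd_conv_nth)
  with xs i have "xs ! k \<in> T" "(a, b) = NE (xs ! k) \<or> is_SE (xs ! k) (a, b)"
    by (auto simp: tile_walk_def)
  then show ?thesis by (auto simp: NE_def is_SE_def prod_eq_iff)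
qed

lemma tile_succ:
  assumes "is_tile T" "(a, b) \<in> T" "(a, b) \<noteq> tile_end T"
  shows "(a, b + 1) \<in> T \<or> (a - 1, b) \<in> T"
proof -
  obtain xs where xs: "tile_walk T xs" using tile_walk_exists[OF assms(1)] ..
  then obtain i where i: "i < length xs" "(a, b) = xs ! i"
    using assms(2) by (auto simp: tile_walk_def in_set_conv_nth)
  with assms(3) tile_walk_end[OF xs] have "Suc i < length xs"
    by (metis Suc_lessI diff_Suc_1 last_conv_nth list.size(3) not_less_zero)
  with xs i have "xs ! Suc i \<in> T" "xs ! Suc i = NE (a, b) \<or> is_SE (a, b) (xs ! Suc i)"
    by (auto simp: tile_walk_def)
  then show ?thesis by (cases "xs ! Suc i") (auto simp: NE_def is_SE_def)
qed

lemma dyck_tile_height_le: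
  assumes "is_dyck_tile T" "y \<in> T"
  shows "height y \<le> height (tile_start T)" "height y \<le> height (tile_end T)"
proof -
  have "finite T" using assms(1) by (auto simp: is_dyck_tile_def is_tile_def)
  with assms show "height y \<le> height (tile_start T)" "height y \<le> height (tile_end T)"
    by (auto simp: is_dyck_tile_def)
qed

lemma partition_down_closed:
  assumes "is_partition P" "(a, b) \<in> P" "1 \<le> a'" "a' \<le> a" "1 \<le> b'" "b' \<le> b"
  shows "(a', b') \<in> P"
  using assms unfolding is_partition_def by blast

lemma addable_iff:
  assumes "is_partition P"
  shows "addable P (a, b) \<longleftrightarrow> 1 \<le> a \<and> 1 \<le> b \<and> (a, b) \<notin> P \<and>
    (2 \<le> a \<longrightarrow> (a - 1, b) \<in> P) \<and> (2 \<le> b \<longrightarrow> (a, b - 1) \<in> P)"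
proof
  assume "addable P (a, b)"
  then have P': "is_partition (insert (a, b) P)" and ab: "1 \<le> a" "1 \<le> b" "(a, b) \<notin> P"
    by (auto simp: addable_def is_node_def)
  moreover have "(a - 1, b) \<in> P" if "2 \<le> a"
  proof -
    have "(a - 1, b) \<in> insert (a, b) P"
      by (rule partition_down_closed[OF P', of a b]) (use that ab in auto)
    with that show ?thesis by auto
  qed
  moreover have "(a, b - 1) \<in> P" if "2 \<le> b"
  proof -
    have "(a, b - 1) \<in> insert (a, b) P"
      by (rule partition_down_closed[OF P', of a b]) (use that ab in auto)
    with that show ?thesis by auto
  qed
  ultimately show "1 \<le> a \<and> 1 \<le> b \<and> (a, b) \<notin> P \<and>
    (2 \<le> a \<longrightarrow> (a - 1, b) \<in> P) \<and> (2 \<le> b \<longrightarrow> (a, b - 1) \<in> P)"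
    by blast
next
  assume h: "1 \<le> a \<and> 1 \<le> b \<and> (a, b) \<notin> P \<and>
    (2 \<le> a \<longrightarrow> (a - 1, b) \<in> P) \<and> (2 \<le> b \<longrightarrow> (a, b - 1) \<in> P)"
  have "(c', d') \<in> insert (a, b) P"
    if "(c, d) \<in> insert (a, b) P" "1 \<le> c'" "c' \<le> c" "1 \<le> d'" "d' \<le> d" for c d c' d'
  proof (cases "(c, d) = (a, b) \<and> (c', d') \<noteq> (a, b)")
    case True
    then have "c' \<le> a - 1 \<or> d' \<le> b - 1" using that by auto
    then show ?thesis
      using h that True partition_down_closed[OF assms, of "a - 1" b c' d']
        partition_down_closed[OF assms, of a "b - 1" c' d'] by auto
  next
    case False
    with that partition_down_closed[OF assms, of c d c' d'] show ?thesis by auto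
  qed
  with h assms show "addable P (a, b)"
    by (auto simp: addable_def is_partition_def is_node_def)
qed

lemma addable_subset:
  assumes "is_partition P" "Q \<subseteq> P" "is_partition Q" "addable Q m"
  shows "m \<in> P \<or> addable P m"
  using assms by (cases m) (auto simp: addable_iff)

lemma N_addable_mem:
  assumes "is_partition P" "addable P m" "is_node a" "N a = m"
  shows "a \<in> P"
proof -
  obtain c d where a: "a = (c, d)" by fastforce
  with assms have "(c, d + 1) \<in> P"
    by (auto simp: addable_iff is_node_def N_def)
  with assms(1,3) a show ?thesis
    by (auto simp: is_node_def intro: partition_down_closed)
qed

text \<open>A valley is a local minimum of height: the tile passes from the node above-left of \<open>x\<close>
  through \<open>x\<close> to the node above-right.\<close>
definition valley :: "node set \<Rightarrow> node \<Rightarrow> bool" where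
  "valley T x \<longleftrightarrow> x \<in> T \<and> (fst x + 1, snd x) \<in> T \<and> (fst x, snd x + 1) \<in> T"

lemma dyck_tile_valley_at_addable:
  assumes "is_dyck_tile T" "(a, b) \<in> T" "T \<noteq> {(a, b)}"
    and "is_partition P" "addable P (a, b)" "T \<inter> P = {}"
  shows "valley T (a, b)"
proof -
  have T: "is_tile T" using assms(1) by (simp add: is_dyck_tile_def)
  have nodes: "\<And>n. n \<in> T \<Longrightarrow> is_node n" using T by (simp add: is_tile_def)
  have lower: "2 \<le> a \<longrightarrow> (a - 1, b) \<in> P" "2 \<le> b \<longrightarrow> (a, b - 1) \<in> P"
    using assms(5) unfolding addable_iff[OF assms(4)] by simp_all
  have "(a, b - 1) \<notin> T"
  proof
    assume "(a, b - 1) \<in> T"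
    moreover from nodes[OF this] have "2 \<le> b" by (simp add: is_node_def, arith)
    ultimately show False using lower(2) assms(6) by blast
  qed
  then have pred: "(a, b) \<noteq> tile_start T \<Longrightarrow> (a + 1, b) \<in> T"
    using tile_pred[OF T assms(2)] by blast
  have "(a - 1, b) \<notin> T"
  proof
    assume "(a - 1, b) \<in> T"
    moreover from nodes[OF this] have "2 \<le> a" by (simp add: is_node_def, arith)
    ultimately show False using lower(1) assms(6) by blast
  qed
  then have succ: "(a, b) \<noteq> tile_end T \<Longrightarrow> (a, b + 1) \<in> T"
    using tile_succ[OF T assms(2)] by blast
  have "(a, b) \<noteq> tile_start T"
  proof
    assume start: "(a, b) = tile_start T"
    have "(a, b) \<noteq> tile_end T"
      using assms(3) tile_start_eq_end[OF T] start by metis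
    with succ have "height (a, b + 1) \<le> height (tile_start T)"
      by (intro dyck_tile_height_le(1)[OF assms(1)])
    then have "height (a, b + 1) \<le> height (a, b)" by (simp only: start)
    then show False by (simp add: height_def)
  qed
  with pred have left: "(a + 1, b) \<in> T" by blast
  have "(a, b) \<noteq> tile_end T"
  proof
    assume "(a, b) = tile_end T"
    with dyck_tile_height_le(2)[OF assms(1) left] have "height (a + 1, b) \<le> height (a, b)"
      by (simp only:)
    then show False by (simp add: height_def)
  qed
  with succ left assms(2) show ?thesis by (simp add: valley_def)
qed

lemma valley_N_valley:
  assumes "is_dyck_tiling S D" "cover_inclusive S D" "T \<in> D" "valley T x" "N x \<in> S"
  shows "\<exists>T'\<in>D. valley T' (N x)"
proof -
  obtain a b where x: "x = (a, b)" by fastforce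
  have tiles: "\<And>T. T \<in> D \<Longrightarrow> is_tile T" and cover: "\<Union>D = S"
    and disj: "\<And>T T'. T \<in> D \<Longrightarrow> T' \<in> D \<Longrightarrow> T \<noteq> T' \<Longrightarrow> T \<inter> T' = {}"
    using assms(1) by (auto simp: is_dyck_tiling_def is_dyck_tile_def)
  have V: "(a, b) \<in> T" "(a + 1, b) \<in> T" "(a, b + 1) \<in> T"
    using assms(4) x by (auto simp: valley_def)
  have Nx: "N x = (a + 1, b + 1)" using x by (simp add: N_def)
  obtain T' where T': "T' \<in> D" "(a + 1, b + 1) \<in> T'"
    using assms(5) cover Nx by auto
  have "x \<in> S" using assms(3) V(1) cover x by auto
  then have "col (tile_start T') \<le> col (tile_start T)" "col (tile_end T) \<le> col (tile_end T')"
    using assms(2) assms(3,5) T' V(1) x Nx unfolding cover_inclusive_def by metis+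
  moreover have "col (tile_start T) \<le> col (a + 1, b)" "col (a, b + 1) \<le> col (tile_end T)"
    using tile_start_le[OF tiles[OF assms(3)]] tile_end_ge[OF tiles[OF assms(3)]] V by auto
  moreover have "col (a + 1, b) < col (a + 1, b + 1)" "col (a + 1, b + 1) < col (a, b + 1)"
    by (simp_all add: col_def)
  ultimately have "(a + 1, b + 1) \<noteq> tile_start T'" "(a + 1, b + 1) \<noteq> tile_end T'"
    by force+
  moreover have "T \<noteq> T'"
  proof
    assume "T = T'"
    with T'(2) have "(a, b) = (a + 1, b + 1)"
      by (intro tile_col_inj[OF tiles[OF assms(3)] V(1)]) (auto simp: col_def)
    then show False by simp
  qed
  then have "(a + 1, b) \<notin> T'" "(a, b + 1) \<notin> T'"
    using disj[OF assms(3) T'(1)] V by auto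
  ultimately have "(a + 1 + 1, b + 1) \<in> T'" "(a + 1, b + 1 + 1) \<in> T'"
    using tile_pred[OF tiles[OF T'(1)] T'(2)] tile_succ[OF tiles[OF T'(1)] T'(2)] by auto
  with T' Nx show ?thesis by (auto simp: valley_def)
qed

lemma ci_dyck_tiling_no_valley:
  assumes "is_partition lam" "is_partition mu"
    and "is_dyck_tiling (lam - mu) D" "cover_inclusive (lam - mu) D"
    and "T \<in> D" "valley T (a, b)"
    and "\<not> (\<exists>n. addable lam n \<and> col n = col (a, b))"
  shows False
proof -
  have in_S: "x \<in> lam - mu" if "T' \<in> D" "x \<in> T'" for T' x
    using assms(3) that by (auto simp: is_dyck_tiling_def)
  have valleys: "\<exists>T'\<in>D. valley T' (a + i, b + i)" for i
  proof (induction i)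
    case 0
    with assms(5,6) show ?case by auto
  next
    case (Suc i)
    then obtain T' where T': "T' \<in> D" "valley T' (a + i, b + i)" by blast
    then have V: "(a + i, b + i) \<in> lam - mu" "(a + i + 1, b + i) \<in> lam" "(a + i, b + i + 1) \<in> lam"
      using in_S by (auto simp: valley_def)
    have node: "is_node (a + i, b + i)"
      using V(1) assms(1) by (auto simp: is_partition_def)
    have "(a + i + 1, b + i + 1) \<in> lam"
    proof (rule ccontr)
      assume "(a + i + 1, b + i + 1) \<notin> lam"
      with V node have "addable lam (a + i + 1, b + i + 1)"
        by (simp add: addable_iff[OF assms(1)] is_node_def)
      moreover have "col (a + i + 1, b + i + 1) = col (a, b)" by (simp add: col_def)
      ultimately show False using assms(7) by blast
    qed
    moreover have "(a + i + 1, b + i + 1) \<notin> mu"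
      using V(1) node partition_down_closed[OF assms(2), of "a + i + 1" "b + i + 1" "a + i" "b + i"]
      by (auto simp: is_node_def)
    ultimately have "N (a + i, b + i) \<in> lam - mu" by (simp add: N_def)
    from valley_N_valley[OF assms(3,4) T' this] show ?case by (simp add: N_def)
  qed
  have "range (\<lambda>i. (a + i, b + i)) \<subseteq> lam"
    using valleys in_S by (auto simp: valley_def)
  moreover have "infinite (range (\<lambda>i. (a + i, b + i)))"
    using finite_imageD[of "\<lambda>i. (a + i, b + i)" UNIV] by (auto simp: inj_on_def)
  ultimately show False
    using assms(1) finite_subset by (auto simp: is_partition_def)
qed

lemma ci_dyck_tiling_singleton_addable:
  assumes "is_partition lam" "is_partition mu" "addable mu m" "m \<in> lam"
    and "\<not> (\<exists>n. addable lam n \<and> col n = col m)"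
    and tiling: "is_dyck_tiling (lam - mu) D" "cover_inclusive (lam - mu) D"
  shows "{m} \<in> D"
proof -
  obtain a b where m: "m = (a, b)" by fastforce
  have "m \<in> lam - mu" using assms(3,4) by (simp add: addable_def)
  then obtain T where T: "T \<in> D" "m \<in> T"
    using tiling(1) unfolding is_dyck_tiling_def by blast
  have "T \<inter> mu = {}" "is_dyck_tile T"
    using tiling(1) T(1) by (auto simp: is_dyck_tiling_def)
  show ?thesis
  proof (rule ccontr)
    assume "{m} \<notin> D"
    with T have "valley T (a, b)"
      using dyck_tile_valley_at_addable[OF \<open>is_dyck_tile T\<close> _ _ assms(2) _ \<open>T \<inter> mu = {}\<close>]
        assms(3) m by auto
    with ci_dyck_tiling_no_valley[OF assms(1,2) tiling T(1)] assms(5) m show False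
      by blast
  qed
qed

lemma dyck_tile_singleton:
  assumes "is_node m"
  shows "is_dyck_tile {m}"
proof -
  have "tile_start {m} = m" "tile_end {m} = m"
    by (auto simp: tile_start_def tile_end_def)
  with assms show ?thesis
    by (auto simp: is_dyck_tile_def is_tile_def intro!: exI[of _ "[m]"])
qed

lemma dyck_tiling_remove_singleton:
  assumes "is_dyck_tiling S D" "{m} \<in> D"
  shows "is_dyck_tiling (S - {m}) (D - {{m}})"
proof -
  have disj: "\<forall>T\<in>D. T \<noteq> {m} \<longrightarrow> T \<inter> {m} = {}" and cover: "\<Union>D = S"
    using assms unfolding is_dyck_tiling_def by auto
  have "\<Union>(D - {{m}}) = S - {m}"
  proof
    show "\<Union>(D - {{m}}) \<subseteq> S - {m}" using disj cover by blast
    show "S - {m} \<subseteq> \<Union>(D - {{m}})" using cover by blast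
  qed
  with assms(1) show ?thesis by (simp add: is_dyck_tiling_def)
qed

lemma dyck_tiling_insert_singleton:
  assumes "is_dyck_tiling S D" "is_node m" "m \<notin> S"
  shows "is_dyck_tiling (insert m S) (insert {m} D)"
  using assms dyck_tile_singleton unfolding is_dyck_tiling_def by blast

lemma cover_inclusive_subset:
  "cover_inclusive S D \<Longrightarrow> S' \<subseteq> S \<Longrightarrow> D' \<subseteq> D \<Longrightarrow> cover_inclusive S' D'"
  unfolding cover_inclusive_def by blast

lemma cover_inclusive_insert_singleton:
  assumes "is_dyck_tiling S D" "cover_inclusive S D" "m \<notin> S" "\<forall>a\<in>S. N a \<noteq> m"
  shows "cover_inclusive (insert m S) (insert {m} D)"
  unfolding cover_inclusive_def
proof (intro allI impI ballI)
  fix a T T'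
  assume a: "a \<in> insert m S" "N a \<in> insert m S" and T: "T \<in> insert {m} D" "T' \<in> insert {m} D"
    and mem: "a \<in> T" "N a \<in> T'"
  have tiles: "\<And>T. T \<in> D \<Longrightarrow> is_tile T" and cover: "\<Union>D = S"
    using assms(1) by (auto simp: is_dyck_tiling_def is_dyck_tile_def)
  have "N a \<noteq> m" using a(1) assms(4) by (cases a) (auto simp: N_def)
  with T(2) mem(2) have T': "T' \<in> D" by auto
  show "col (tile_start T') \<le> col (tile_start T) \<and> col (tile_end T) \<le> col (tile_end T')"
  proof (cases "T = {m}")
    case True
    have "tile_start {m} = m" "tile_end {m} = m"
      by (auto simp: tile_start_def tile_end_def)
    moreover have "col (N a) = col m" using True mem(1) by (simp add: N_def col_def)
    ultimately show ?thesis
      using True tile_start_le[OF tiles[OF T'] mem(2)] tile_end_ge[OF tiles[OF T'] mem(2)] by simp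
  next
    case False
    with T(1) have "T \<in> D" by auto
    with T' mem cover have "a \<in> S" "N a \<in> S" by auto
    with assms(2) \<open>T \<in> D\<close> T' mem show ?thesis unfolding cover_inclusive_def by blast
  qed
qed

lemma bij_betw_remove_singleton_tile:
  assumes "is_node m" "m \<in> S" "\<forall>a\<in>S. N a \<noteq> m"
    and "\<And>D. is_dyck_tiling S D \<Longrightarrow> cover_inclusive S D \<Longrightarrow> {m} \<in> D"
  shows "bij_betw (\<lambda>D. D - {{m}})
    {D. is_dyck_tiling S D \<and> cover_inclusive S D}
    {D. is_dyck_tiling (S - {m}) D \<and> cover_inclusive (S - {m}) D}"
proof (rule bij_betw_byWitness[where f' = "insert {m}"])
  have S: "insert m (S - {m}) = S" using assms(2) by auto
  have no_singleton: "{m} \<notin> D" if "is_dyck_tiling (S - {m}) D" for D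
    using that by (auto simp: is_dyck_tiling_def)
  show "\<forall>D\<in>{D. is_dyck_tiling S D \<and> cover_inclusive S D}. insert {m} (D - {{m}}) = D"
    using assms(4) by auto
  show "\<forall>D\<in>{D. is_dyck_tiling (S - {m}) D \<and> cover_inclusive (S - {m}) D}. insert {m} D - {{m}} = D"
    using no_singleton by auto
  show "(\<lambda>D. D - {{m}}) ` {D. is_dyck_tiling S D \<and> cover_inclusive S D}
    \<subseteq> {D. is_dyck_tiling (S - {m}) D \<and> cover_inclusive (S - {m}) D}"
    using assms(4) dyck_tiling_remove_singleton cover_inclusive_subset[of S _ "S - {m}"] by blast
  show "insert {m} ` {D. is_dyck_tiling (S - {m}) D \<and> cover_inclusive (S - {m}) D}
    \<subseteq> {D. is_dyck_tiling S D \<and> cover_inclusive S D}"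
    using dyck_tiling_insert_singleton[OF _ assms(1), of "S - {m}"]
      cover_inclusive_insert_singleton[of "S - {m}" _ m] assms(3) S by auto
qed

theorem proposition3p3:
  fixes lam mu :: "node set" and j :: int and m :: node
  assumes "is_partition lam" and "is_partition mu"
    and "addable mu m" and "col m = j"
    and "\<not> (\<exists>n. addable lam n \<and> col n = j)"
  shows "i_num lam mu = i_num lam (insert m mu)"
proof (cases "mu \<subseteq> lam")
  case False
  then show ?thesis by (simp add: i_num_def)
next
  case True
  have no_addable: "\<not> (\<exists>n. addable lam n \<and> col n = col m)" using assms(4,5) by simp
  then have "m \<in> lam" using addable_subset[OF assms(1) True assms(2,3)] by blast
  have "is_node m" "m \<notin> mu" using assms(3) by (auto simp: addable_def)
  have "N a \<noteq> m" if "a \<in> lam - mu" for a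
    using that N_addable_mem[OF assms(2,3)] assms(1) unfolding is_partition_def by blast
  moreover note ci_dyck_tiling_singleton_addable[OF assms(1-3) \<open>m \<in> lam\<close> no_addable]
  moreover have "lam - insert m mu = lam - mu - {m}" by blast
  ultimately have "bij_betw (\<lambda>D. D - {{m}}) (ci_dyck_tilings lam mu) (ci_dyck_tilings lam (insert m mu))"
    using bij_betw_remove_singleton_tile[OF \<open>is_node m\<close>, of "lam - mu"] \<open>m \<in> lam\<close> \<open>m \<notin> mu\<close>
    unfolding ci_dyck_tilings_def by simp
  with True \<open>m \<in> lam\<close> show ?thesis by (simp add: i_num_def bij_betw_same_card)
qed

end
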